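(* Let $\langle A,f,c\rangle$ be an instance with $f$ subadditive and let $B\le 1$ be a budget. If $S\subseteq A$ satisfies $p(S)\le B$, then $|S\setminus L|\le 1$.
   Context: An instance $\langle A,f,c\rangle$ consists of a finite set $A$ of $n$ agents, a monotone nondecreasing set function $f:2^A\to[0,1]$ (the reward function), and costs $c=(c_i)_{i\in A}$ with $c_i\ge 0$. For $S\subseteq A$ and $i\in S$ write $f_S(i)=f(S)-f(S\setminus\{i\})$. The payment of a set $S$ is $p(S)=\sum_{i\in S} c_i/f_S(i)$, with the conventions $c_i/f_S(i)=0$ if $c_i=0=f_S(i)$ and $c_i/f_S(i)=\infty$ if $c_i>0=f_S(i)$. $f$ is subadditive if $f(S\cup S')\le f(S)+f(S')$ for all $S,S'\subseteq A$. The set of light agents is $L=\{i\in A: c_i/f(\{i\})\le 1/2\}$; agents in $A\setminus L$ are heavy. *)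

theory Defs
  imports Complex_Main "HOL-Library.Extended_Real"
begin

definition is_instance :: "'a set \<Rightarrow> ('a set \<Rightarrow> real) \<Rightarrow> ('a \<Rightarrow> real) \<Rightarrow> bool" where
  "is_instance A f c \<longleftrightarrow> finite A
     \<and> (\<forall>S. S \<subseteq> A \<longrightarrow> 0 \<le> f S \<and> f S \<le> 1)
     \<and> (\<forall>S T. S \<subseteq> T \<and> T \<subseteq> A \<longrightarrow> f S \<le> f T)
     \<and> (\<forall>i\<in>A. 0 \<le> c i)"

definition subadditive_on :: "'a set \<Rightarrow> ('a set \<Rightarrow> real) \<Rightarrow> bool" where
  "subadditive_on A f \<longleftrightarrow> (\<forall>S S'. S \<subseteq> A \<and> S' \<subseteq> A \<longrightarrow> f (S \<union> S') \<le> f S + f S')"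

definition marg :: "('a set \<Rightarrow> real) \<Rightarrow> 'a set \<Rightarrow> 'a \<Rightarrow> real" where
  "marg f S i = f S - f (S - {i})"

definition ratio :: "real \<Rightarrow> real \<Rightarrow> ereal" where
  "ratio c x = (if x = 0 then (if c = 0 then 0 else \<infinity>) else ereal (c / x))"

definition payment :: "('a set \<Rightarrow> real) \<Rightarrow> ('a \<Rightarrow> real) \<Rightarrow> 'a set \<Rightarrow> ereal" where
  "payment f c S = (\<Sum>i\<in>S. ratio (c i) (marg f S i))"

definition light :: "'a set \<Rightarrow> ('a set \<Rightarrow> real) \<Rightarrow> ('a \<Rightarrow> real) \<Rightarrow> 'a set" where
  "light A f c = {i\<in>A. ratio (c i) (f {i}) \<le> ereal (1/2)}"

end

theory Submission
  imports Defs
begin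

text \<open>By subadditivity the marginal contribution of an agent in a set never exceeds its stand-alone
  value, and the convention for division by zero keeps c/x antitone in x. So every heavy agent in S
  is paid more than 1/2, and two heavy agents would already exhaust any budget B \<le> 1.\<close>

lemma ratio_nonneg: "0 \<le> c \<Longrightarrow> 0 \<le> x \<Longrightarrow> 0 \<le> ratio c x"
  unfolding ratio_def by auto

lemma ratio_antimono:
  assumes "0 \<le> c" "0 \<le> x" "x \<le> y"
  shows "ratio c y \<le> ratio c x"
proof (cases "x = 0")
  case True
  then show ?thesis
    using assms by (cases "c = 0") (auto simp: ratio_def)
next
  case False
  with assms have "0 < x" "0 < y" by linarith+
  then show ?thesis
    using assms by (simp add: ratio_def frac_le)
qed

lemma marg_nonneg:
  assumes "is_instance A f c" "S \<subseteq> A"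
  shows "0 \<le> marg f S i"
  using assms unfolding is_instance_def marg_def by (metis Diff_subset diff_ge_0_iff_ge)

lemma marg_le_singleton:
  assumes "subadditive_on A f" "S \<subseteq> A" "i \<in> S"
  shows "marg f S i \<le> f {i}"
proof -
  have "S - {i} \<subseteq> A" "{i} \<subseteq> A"
    using assms(2,3) by auto
  then have "f (S - {i} \<union> {i}) \<le> f (S - {i}) + f {i}"
    using assms(1) unfolding subadditive_on_def by (metis (no_types, lifting))
  moreover have "S - {i} \<union> {i} = S"
    using \<open>i \<in> S\<close> by blast
  ultimately show ?thesis
    unfolding marg_def by simp
qed

lemma heavy_share_gt_half:
  assumes "is_instance A f c" "subadditive_on A f" "S \<subseteq> A" "i \<in> S - light A f c"
  shows "ereal (1/2) < ratio (c i) (marg f S i)"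
proof -
  have "i \<in> A" "0 \<le> c i"
    using assms unfolding is_instance_def by auto
  then have "ereal (1/2) < ratio (c i) (f {i})"
    using assms(4) unfolding light_def by auto
  also have "\<dots> \<le> ratio (c i) (marg f S i)"
    using assms \<open>0 \<le> c i\<close> by (intro ratio_antimono marg_nonneg marg_le_singleton) auto
  finally show ?thesis .
qed

theorem mainTheorem4:
  fixes A :: "'a set" and f :: "'a set \<Rightarrow> real" and c :: "'a \<Rightarrow> real"
    and B :: real and S :: "'a set"
  assumes "is_instance A f c"
    and "subadditive_on A f"
    and "B \<le> 1"
    and "S \<subseteq> A"
    and "payment f c S \<le> ereal B"
  shows "card (S - light A f c) \<le> 1"
proof (rule ccontr)
  let ?share = "\<lambda>k. ratio (c k) (marg f S k)"
  assume "\<not> ?thesis"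
  moreover have "finite S"
    using assms(1,4) finite_subset unfolding is_instance_def by metis
  ultimately obtain i j where ij: "i \<in> S - light A f c" "j \<in> S - light A f c" "i \<noteq> j"
    using card_le_Suc0_iff_eq[of "S - light A f c"] by auto
  have "ereal 1 = ereal (1/2) + ereal (1/2)"
    by simp
  also have "\<dots> < ?share i + ?share j"
    using heavy_share_gt_half[OF assms(1,2,4)] ij by (intro ereal_add_strict_mono2) auto
  also have "\<dots> = (\<Sum>k\<in>{i, j}. ?share k)"
    using ij by simp
  also have "\<dots> \<le> payment f c S"
    unfolding payment_def using ij \<open>finite S\<close> assms(1,4)
    by (intro sum_mono2) (auto intro!: ratio_nonneg marg_nonneg simp: is_instance_def)
  also have "\<dots> \<le> ereal B"
    by (fact assms(5))
  finally show False
    using assms(3) by simp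
qed

end
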